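(* Let $\mathcal{A}$ be an $AW^*$-algebra and let $p,q\in\mathcal{A}$ be projections. Then $p$ and $q$ are orthogonal (i.e. $pq=0$) if and only if $$\inf_{\mathcal{A}^1}\{p,\tfrac12\}=\inf_{\mathcal{A}^1}\Big\{p,\ \sup_{\mathcal{A}^1}\{q,\tfrac12\}\Big\}.$$
   Context: $\mathcal{A}$ is unital. An $AW^*$-algebra is a $C^*$-algebra $\mathcal{A}$ such that for every nonempty $\mathcal{F}\subseteq\mathcal{A}$ there is a projection $p$ with $\{a\in\mathcal{A}:ba=0\ \forall b\in\mathcal{F}\}=p\mathcal{A}$. $\mathcal{A}^1=\{a\in\mathcal{A}^{sa}:0\le a\le1\}$ with order $a\le b\iff b-a\ge0$; $\sup_{\mathcal{A}^1},\inf_{\mathcal{A}^1}$ denote least upper bounds and greatest lower bounds in $\mathcal{A}^1$ (for a projection $q$ one has $\sup_{\mathcal{A}^1}\{q,\tfrac12\}=q+\tfrac12(1-q)$, and $\inf_{\mathcal{A}^1}\{p,\tfrac12\}=\tfrac12p$). *)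

theory Defs
  imports Complex_Main
begin

text \<open>The real vector structure inherited
  from the class banach/real_normed_algebra_1 is the restriction of the complex one.\<close>

class cstar_algebra = banach + real_normed_algebra_1 +
  fixes scaleC :: "complex \<Rightarrow> 'a \<Rightarrow> 'a"
    and adj :: "'a \<Rightarrow> 'a"
  assumes scaleC_add_right: "scaleC c (x + y) = scaleC c x + scaleC c y"
    and scaleC_add_left: "scaleC (c + d) x = scaleC c x + scaleC d x"
    and scaleC_scaleC: "scaleC c (scaleC d x) = scaleC (c * d) x"
    and scaleC_one: "scaleC 1 x = x"
    and scaleR_scaleC: "scaleR r x = scaleC (complex_of_real r) x"
    and norm_scaleC: "norm (scaleC c x) = cmod c * norm x"
    and mult_scaleC_left: "scaleC c x * y = scaleC c (x * y)"
    and mult_scaleC_right: "x * scaleC c y = scaleC c (x * y)"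
    and adj_adj: "adj (adj x) = x"
    and adj_add: "adj (x + y) = adj x + adj y"
    and adj_mult: "adj (x * y) = adj y * adj x"
    and adj_scaleC: "adj (scaleC c x) = scaleC (cnj c) (adj x)"
    and cstar_identity: "norm (adj x * x) = norm x * norm x"

context cstar_algebra
begin

definition invertible_el :: "'a \<Rightarrow> bool" where
  "invertible_el x \<longleftrightarrow> (\<exists>y. x * y = 1 \<and> y * x = 1)"

definition spectrum :: "'a \<Rightarrow> complex set" where
  "spectrum a = {c. \<not> invertible_el (scaleC c 1 - a)}"

definition selfadjoint :: "'a \<Rightarrow> bool" where
  "selfadjoint a \<longleftrightarrow> adj a = a"

definition positive :: "'a \<Rightarrow> bool" where
  "positive a \<longleftrightarrow> selfadjoint a \<and> spectrum a \<subseteq> complex_of_real ` {0..}"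

definition cle :: "'a \<Rightarrow> 'a \<Rightarrow> bool" where
  "cle a b \<longleftrightarrow> positive (b - a)"

definition projection :: "'a \<Rightarrow> bool" where
  "projection p \<longleftrightarrow> p * p = p \<and> adj p = p"

definition unit_interval :: "'a set" where
  "unit_interval = {a. selfadjoint a \<and> cle 0 a \<and> cle a 1}"

definition is_sup1 :: "'a set \<Rightarrow> 'a \<Rightarrow> bool" where
  "is_sup1 S x \<longleftrightarrow> x \<in> unit_interval \<and> (\<forall>s\<in>S. cle s x) \<and>
     (\<forall>y\<in>unit_interval. (\<forall>s\<in>S. cle s y) \<longrightarrow> cle x y)"

definition is_inf1 :: "'a set \<Rightarrow> 'a \<Rightarrow> bool" where
  "is_inf1 S x \<longleftrightarrow> x \<in> unit_interval \<and> (\<forall>s\<in>S. cle x s) \<and>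
     (\<forall>y\<in>unit_interval. (\<forall>s\<in>S. cle y s) \<longrightarrow> cle y x)"

end

class aw_star_algebra = cstar_algebra +
  assumes aw_star: "F \<noteq> {} \<Longrightarrow>
     \<exists>p. projection p \<and> {a. \<forall>b\<in>F. b * a = 0} = {p * x | x. True}"

end

theory Submission
  imports Defs "HOL-Analysis.Topology_Euclidean_Space"
begin

text \<open>
  In the effect algebra A^1 the join of a projection q with 1/2 is (1 + q)/2, and the meet
  of a projection p with 1/2 is p/2.  An effect y \<le> p satisfies y = p y p, so when pq = 0,
  compressing y \<le> (1 + q)/2 by p gives y \<le> p/2; hence p/2 is also the meet of p and
  (1 + q)/2.  Conversely y = p/2 + pqp/4 is an effect below p and below (1 + q)/2, the
  latter because (1 + q)/2 - y = X q X + (1 - p)(1 - q)(1 - p)/2 with X = p/2 + (1 - p).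
  If p/2 is the meet, then pqp \<le> 0, so (qp)*(qp) = pqp = 0 and pq = 0.

  Beneath this lies the fact that the positive elements form a convex cone meeting its
  negative only in 0.  Both properties rest on the equality of norm and spectral radius
  for self-adjoint elements, which has a proof without complex analysis: if a self-adjoint
  x of norm 1 had no spectrum on the unit circle, averaging its resolvent over the N-th
  roots of unity, unrotated and rotated by e^(i pi/N), would give inverses of 1 - x^N and
  1 + x^N differing by O(1/N).  This forces ||x^(2N)|| < 1, contradicting the C*-identity.
\<close>

section \<open>Complex scalars and the involution\<close>

definition of_complex :: "complex \<Rightarrow> 'a::cstar_algebra" where
  "of_complex c = scaleC c 1"

lemma scaleC_zero_left [simp]: "scaleC 0 x = 0"
  using scaleC_add_left[of 0 0 x] by simp

lemma scaleC_minus_left: "scaleC (- c) x = - scaleC c x"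
proof -
  have "scaleC c x + scaleC (-c) x = 0" using scaleC_add_left[of c "-c" x] by simp
  thus ?thesis using minus_unique by metis
qed

lemma scaleC_diff_left: "scaleC (c - d) x = scaleC c x - scaleC d x"
  using scaleC_add_left[of c "-d" x] scaleC_minus_left by simp

lemma scaleC_conv_of_complex_mult: "scaleC c x = of_complex c * x"
  by (simp add: of_complex_def mult_scaleC_left)

lemma of_complex_commute: "of_complex c * x = x * of_complex c"
  by (simp add: of_complex_def mult_scaleC_left mult_scaleC_right)

lemma of_complex_left_commute: "of_complex c * (x * y) = x * (of_complex c * y)"
  by (simp add: mult.assoc[symmetric] of_complex_commute[of c x])

lemma of_complex_add: "of_complex (c + d) = of_complex c + of_complex d"
  by (simp add: of_complex_def scaleC_add_left)

lemma of_complex_diff: "of_complex (c - d) = of_complex c - of_complex d"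
  by (simp add: of_complex_def scaleC_diff_left)

lemma of_complex_minus: "of_complex (- c) = - of_complex c"
  by (simp add: of_complex_def scaleC_minus_left)

lemma of_complex_mult: "of_complex (c * d) = of_complex c * of_complex d"
  by (simp add: of_complex_def mult_scaleC_left scaleC_scaleC)

lemma of_complex_one [simp]: "of_complex 1 = 1"
  by (simp add: of_complex_def scaleC_one)

lemma of_complex_zero [simp]: "of_complex 0 = 0"
  by (simp add: of_complex_def)

lemma of_complex_of_real: "of_complex (complex_of_real r) = of_real r"
  by (simp add: of_complex_def of_real_def scaleR_scaleC)

lemma scaleR_conv_of_real_mult: "scaleR r x = of_real r * (x::'a::cstar_algebra)"
  by (simp add: scaleR_scaleC scaleC_conv_of_complex_mult of_complex_of_real)

lemma of_complex_of_real_mult: "of_complex (complex_of_real r) * x = scaleR r x"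
  by (simp add: of_complex_of_real scaleR_conv_of_real_mult)

lemma of_complex_sum: "of_complex (sum f S) = (\<Sum>i\<in>S. of_complex (f i))"
  by (induct S rule: infinite_finite_induct) (simp_all add: of_complex_add)

lemma norm_of_complex_mult: "norm (of_complex c * x) = cmod c * norm x"
  by (simp add: scaleC_conv_of_complex_mult[symmetric] norm_scaleC)

lemma norm_of_complex: "norm (of_complex c :: 'a::cstar_algebra) = cmod c"
  using norm_of_complex_mult[of c "1::'a"] by simp

lemma power_of_complex_mult: "(of_complex c * y) ^ n = of_complex (c ^ n) * y ^ n"
proof (induct n)
  case (Suc n)
  have "(of_complex c * y) ^ Suc n = of_complex c * (y * (of_complex (c ^ n) * y ^ n))"
    by (simp add: Suc power_Suc mult.assoc)
  also have "y * (of_complex (c ^ n) * y ^ n) = of_complex (c ^ n) * (y * y ^ n)"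
    by (rule of_complex_left_commute[symmetric])
  finally show ?case by (simp add: of_complex_mult mult.assoc)
qed simp

lemma adj_zero [simp]: "adj 0 = 0"
  using adj_add[of 0 0] by simp

lemma adj_minus: "adj (- x) = - adj x"
proof -
  have "adj x + adj (-x) = 0" using adj_add[of x "-x"] by simp
  thus ?thesis using minus_unique by metis
qed

lemma adj_diff: "adj (x - y) = adj x - adj y"
  using adj_add[of x "-y"] adj_minus by simp

lemma adj_one [simp]: "adj 1 = 1"
  using adj_mult[of "adj 1" 1] by (simp add: adj_adj)

lemma adj_of_complex: "adj (of_complex c) = of_complex (cnj c)"
  by (simp add: of_complex_def adj_scaleC)

lemma adj_scaleR: "adj (scaleR r x) = scaleR r (adj x)"
  by (simp add: scaleR_scaleC adj_scaleC)

lemma adj_power: "adj (x ^ n) = adj x ^ n"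
  by (induct n) (simp_all add: adj_mult power_commutes)

lemma adj_mult_self_eq_zeroD: "adj x * x = 0 \<Longrightarrow> x = 0"
  using cstar_identity[of x] by simp

section \<open>Invertible elements\<close>

lemma invertible_elI: "x * l = 1 \<Longrightarrow> r * x = 1 \<Longrightarrow> invertible_el x"
  unfolding invertible_el_def by (metis mult.assoc mult_1_left mult_1_right)

lemma invertible_el_mult: "invertible_el a \<Longrightarrow> invertible_el b \<Longrightarrow> invertible_el (a * b)"
  unfolding invertible_el_def by (metis (no_types, lifting) mult.assoc mult_1_left)

lemma invertible_el_minus_iff: "invertible_el (- x) \<longleftrightarrow> invertible_el x"
  unfolding invertible_el_def by (metis minus_mult_minus minus_minus)

lemma invertible_of_complex: "c \<noteq> 0 \<Longrightarrow> invertible_el (of_complex c)"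
  unfolding invertible_el_def
  by (rule exI[of _ "of_complex (inverse c)"]) (simp add: of_complex_mult[symmetric])

lemma invertible_of_complex_mult_iff:
  assumes "c \<noteq> 0" shows "invertible_el (of_complex c * x) \<longleftrightarrow> invertible_el x"
proof
  assume "invertible_el (of_complex c * x)"
  hence "invertible_el (of_complex (inverse c) * (of_complex c * x))"
    using invertible_el_mult[OF invertible_of_complex[of "inverse c"]] assms by auto
  moreover have "of_complex (inverse c) * (of_complex c * x) = x"
    by (simp add: mult.assoc[symmetric] of_complex_mult[symmetric] assms)
  ultimately show "invertible_el x" by simp
qed (use invertible_el_mult invertible_of_complex assms in blast)

definition inv_el :: "'a::cstar_algebra \<Rightarrow> 'a" where
  "inv_el x = (SOME y. x * y = 1 \<and> y * x = 1)"

lemma inv_el_inverse: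
  assumes "invertible_el x" shows "x * inv_el x = 1" "inv_el x * x = 1"
proof -
  have "\<exists>y. x * y = 1 \<and> y * x = 1" using assms invertible_el_def by auto
  hence "x * inv_el x = 1 \<and> inv_el x * x = 1" unfolding inv_el_def by (rule someI_ex)
  thus "x * inv_el x = 1" "inv_el x * x = 1" by auto
qed

lemma inv_el_unique: assumes "x * y = 1" "y * x = 1" shows "inv_el x = y"
proof -
  have i: "invertible_el x" using assms invertible_el_def by auto
  have "inv_el x = inv_el x * (x * y)" using assms by simp
  also have "\<dots> = y" using inv_el_inverse(2)[OF i] by (simp add: mult.assoc[symmetric])
  finally show ?thesis .
qed

lemma inv_el_commute:
  assumes "invertible_el a" "a * b = b * a" shows "inv_el a * b = b * inv_el a"
proof -
  have "inv_el a * b = inv_el a * b * (a * inv_el a)" using inv_el_inverse[OF assms(1)] by simp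
  also have "\<dots> = inv_el a * (a * b) * inv_el a" using assms(2) by (simp add: mult.assoc)
  also have "\<dots> = b * inv_el a" using inv_el_inverse[OF assms(1)] by (simp add: mult.assoc[symmetric])
  finally show ?thesis .
qed

lemma inv_el_diff:
  assumes "invertible_el a" "invertible_el b"
  shows "inv_el a - inv_el b = inv_el a * (b - a) * inv_el b"
proof -
  have "inv_el a * (b - a) * inv_el b = inv_el a * (b * inv_el b) - (inv_el a * a) * inv_el b"
    by (simp add: algebra_simps)
  thus ?thesis using inv_el_inverse[OF assms(1)] inv_el_inverse[OF assms(2)] by simp
qed

lemma neumann_series:
  assumes "norm x < 1"
  shows "invertible_el (1 - x)" "norm (inv_el (1 - x)) \<le> 1 / (1 - norm x)"
proof -
  have sn: "summable (\<lambda>n. norm x ^ n)" using assms by (simp add: summable_geometric)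
  have le: "norm (x ^ n) \<le> norm x ^ n" for n by (rule norm_power_ineq)
  have sm: "summable (\<lambda>n. x ^ n)"
    by (rule summable_comparison_test[OF _ sn]) (use le in auto)
  define s where "s = suminf (\<lambda>n. x ^ n)"
  have h: "(\<Sum>n. x ^ Suc n) = s - 1"
    using suminf_split_head[OF sm] by (simp add: s_def)
  have "x * s = (\<Sum>n. x * x ^ n)" unfolding s_def by (rule suminf_mult[OF sm, symmetric])
  hence r: "(1 - x) * s = 1" using h by (simp add: algebra_simps)
  have "s * x = (\<Sum>n. x ^ n * x)" unfolding s_def by (rule suminf_mult2[OF sm])
  hence l: "s * (1 - x) = 1" using h by (simp add: power_commutes algebra_simps)
  show "invertible_el (1 - x)" using r l invertible_el_def by auto
  have "norm s \<le> (\<Sum>n. norm x ^ n)" unfolding s_def by (rule norm_suminf_le[OF le sn])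
  also have "\<dots> = 1 / (1 - norm x)" using assms by (simp add: suminf_geometric)
  finally show "norm (inv_el (1 - x)) \<le> 1 / (1 - norm x)" using inv_el_unique[OF r l] by simp
qed

lemma norm_inv_el_perturbation_le:
  assumes a: "invertible_el a" and small: "norm (inv_el a) * norm h < 1"
  shows "norm (inv_el (a - h)) \<le> norm (inv_el a) / (1 - norm (inv_el a) * norm h)"
proof -
  let ?a' = "inv_el a"
  have nx: "norm (?a' * h) < 1" using norm_mult_ineq[of ?a' h] small by linarith
  note N = neumann_series[OF nx]
  let ?w = "inv_el (1 - ?a' * h)"
  have w: "(1 - ?a' * h) * ?w = 1" "?w * (1 - ?a' * h) = 1" using inv_el_inverse[OF N(1)] by auto
  have "a * (1 - ?a' * h) = a - (a * ?a') * h" by (simp add: right_diff_distrib mult.assoc)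
  hence fac: "a - h = a * (1 - ?a' * h)" using inv_el_inverse[OF a] by simp
  have "(a - h) * (?w * ?a') = a * ((1 - ?a' * h) * ?w) * ?a'"
    unfolding fac by (simp add: mult.assoc)
  hence r: "(a - h) * (?w * ?a') = 1" using w inv_el_inverse[OF a] by simp
  have "(?w * ?a') * (a - h) = ?w * (?a' * a) * (1 - ?a' * h)"
    unfolding fac by (simp add: mult.assoc)
  hence l: "(?w * ?a') * (a - h) = 1" using w inv_el_inverse[OF a] by simp
  have "norm ?w \<le> 1 / (1 - norm (?a' * h))" by (rule N(2))
  also have "\<dots> \<le> 1 / (1 - norm ?a' * norm h)"
    using nx small norm_mult_ineq[of ?a' h] by (intro divide_left_mono) (auto simp: mult_pos_pos)
  finally have nw: "norm ?w \<le> 1 / (1 - norm ?a' * norm h)" .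
  have "norm (inv_el (a - h)) \<le> norm ?w * norm ?a'"
    unfolding inv_el_unique[OF r l] by (rule norm_mult_ineq)
  also have "\<dots> \<le> 1 / (1 - norm ?a' * norm h) * norm ?a'"
    using nw by (intro mult_right_mono) auto
  finally show ?thesis by simp
qed

lemma jacobson_invertible:
  assumes c0: "c \<noteq> 0" and i: "invertible_el (of_complex c - a * b)"
  shows "invertible_el (of_complex c - b * a)"
proof -
  let ?I = "inv_el (of_complex c - a * b)"
  let ?X = "of_complex (inverse c) * (1 + b * ?I * a)"
  have ci: "of_complex (inverse c) * of_complex c = (1::'a)" using c0 by (simp add: of_complex_mult[symmetric])
  have "(of_complex c - b * a) * (1 + b * ?I * a)
      = of_complex c - b * a + (b * of_complex c - b * a * b) * ?I * a"
    by (simp add: algebra_simps of_complex_commute[of c b] of_complex_left_commute[of c b])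
  also have "(b * of_complex c - b * a * b) = b * (of_complex c - a * b)" by (simp add: algebra_simps)
  also have "b * (of_complex c - a * b) * ?I * a = b * a" using inv_el_inverse(1)[OF i] by (simp add: mult.assoc)
  finally have r0: "(of_complex c - b * a) * (1 + b * ?I * a) = of_complex c" by simp
  have "(1 + b * ?I * a) * (of_complex c - b * a)
      = of_complex c - b * a + b * ?I * (a * of_complex c - a * b * a)"
    by (simp add: algebra_simps of_complex_commute[of c a] of_complex_left_commute[of c a])
  also have "(a * of_complex c - a * b * a) = (of_complex c - a * b) * a"
    by (simp add: algebra_simps of_complex_commute[of c a])
  also have "b * ?I * ((of_complex c - a * b) * a) = b * (?I * (of_complex c - a * b)) * a"
    by (simp only: mult.assoc)
  also have "\<dots> = b * a" using inv_el_inverse(2)[OF i] by simp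
  finally have l0: "(1 + b * ?I * a) * (of_complex c - b * a) = of_complex c" by simp
  have "(of_complex c - b * a) * ?X = of_complex (inverse c) * ((of_complex c - b * a) * (1 + b * ?I * a))"
    by (rule of_complex_left_commute[symmetric])
  hence r: "(of_complex c - b * a) * ?X = 1" using r0 ci by simp
  have l: "?X * (of_complex c - b * a) = 1" using l0 ci by (simp add: mult.assoc)
  show ?thesis using invertible_elI[OF r l] .
qed

section \<open>The spectrum\<close>

lemma spectrum_iff: "c \<in> spectrum a \<longleftrightarrow> \<not> invertible_el (of_complex c - a)"
  by (simp add: spectrum_def of_complex_def)

lemma spectrum_norm_le: assumes "c \<in> spectrum a" shows "cmod c \<le> norm a"
proof (rule ccontr)
  assume "\<not> cmod c \<le> norm a"
  hence lt: "norm a < cmod c" by simp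
  hence c0: "c \<noteq> 0" by auto
  have "norm (of_complex (inverse c) * a) < 1"
    using lt c0 by (simp add: norm_of_complex_mult norm_divide field_simps)
  hence "invertible_el (of_complex c * (1 - of_complex (inverse c) * a))"
    using neumann_series(1) invertible_of_complex_mult_iff c0 by blast
  moreover have "of_complex c * (1 - of_complex (inverse c) * a) = of_complex c - a"
    using c0 by (simp add: right_diff_distrib mult.assoc[symmetric] of_complex_mult[symmetric])
  ultimately show False using assms spectrum_iff by metis
qed

lemma spectrum_add_of_complex: "c \<in> spectrum (a + of_complex d) \<longleftrightarrow> c - d \<in> spectrum a"
  by (simp add: spectrum_iff of_complex_diff algebra_simps)

lemma spectrum_uminus: "c \<in> spectrum (- a) \<longleftrightarrow> - c \<in> spectrum a"
proof -
  have e: "of_complex c - (- a) = - (of_complex (- c) - a)" by (simp add: of_complex_minus)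
  show ?thesis unfolding spectrum_iff e invertible_el_minus_iff ..
qed

lemma spectrum_of_complex_diff: "c \<in> spectrum (of_complex t - a) \<longleftrightarrow> t - c \<in> spectrum a"
proof -
  have e: "of_complex c - (of_complex t - a) = - (of_complex (t - c) - a)" by (simp add: of_complex_diff)
  show ?thesis unfolding spectrum_iff e invertible_el_minus_iff ..
qed

lemma spectrum_of_complex_mult:
  assumes "d \<noteq> 0" shows "c \<in> spectrum (of_complex d * a) \<longleftrightarrow> c / d \<in> spectrum a"
proof -
  have "of_complex d * (of_complex (c / d) - a) = of_complex (d * (c / d)) - of_complex d * a"
    by (simp only: right_diff_distrib of_complex_mult)
  hence "of_complex c - of_complex d * a = of_complex d * (of_complex (c / d) - a)"
    using assms by simp
  thus ?thesis by (simp add: spectrum_iff invertible_of_complex_mult_iff[OF assms])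
qed

lemma spectrum_zero: "c \<in> spectrum (0::'a::cstar_algebra) \<longleftrightarrow> c = 0"
  using invertible_of_complex[of c, where 'a='a] by (auto simp: spectrum_iff invertible_el_def)

lemma spectrum_mult_commute:
  assumes "c \<noteq> 0" shows "c \<in> spectrum (a * b) \<longleftrightarrow> c \<in> spectrum (b * a)"
  using jacobson_invertible[OF assms, of a b] jacobson_invertible[OF assms, of b a]
  by (auto simp: spectrum_iff)

lemma spectrum_orthogonal_add:
  assumes uv: "u * v = 0" and vu: "v * u = 0" and c0: "c \<noteq> 0" and c: "c \<in> spectrum u"
  shows "c \<in> spectrum (u + v)"
proof (rule ccontr)
  assume "c \<notin> spectrum (u + v)"
  hence i: "invertible_el (of_complex c - (u + v))" by (simp add: spectrum_iff)
  let ?I = "inv_el (of_complex c - (u + v))"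
  have f1: "(of_complex c - u) * (of_complex c - v) = of_complex c * (of_complex c - (u + v))"
    by (simp add: algebra_simps uv of_complex_commute[of c u])
  have f2: "(of_complex c - v) * (of_complex c - u) = of_complex c * (of_complex c - (u + v))"
    by (simp add: algebra_simps vu of_complex_commute[of c v])
  have ci: "of_complex c * of_complex (inverse c) = (1::'a)" "of_complex (inverse c) * of_complex c = (1::'a)"
    using c0 by (simp_all add: of_complex_mult[symmetric])
  have "(of_complex c - u) * ((of_complex c - v) * ?I * of_complex (inverse c))
      = of_complex c * ((of_complex c - (u + v)) * ?I) * of_complex (inverse c)"
    using f1 by (simp add: mult.assoc[symmetric])
  also have "\<dots> = 1" using inv_el_inverse[OF i] ci by (simp add: of_complex_commute[of c])
  finally have r: "(of_complex c - u) * ((of_complex c - v) * ?I * of_complex (inverse c)) = 1" .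
  have "(of_complex (inverse c) * ?I * (of_complex c - v)) * (of_complex c - u)
      = of_complex (inverse c) * ?I * (of_complex c * (of_complex c - (u + v)))"
    using f2 by (simp add: mult.assoc)
  also have "\<dots> = of_complex (inverse c) * of_complex c * (?I * (of_complex c - (u + v)))"
    by (simp add: mult.assoc of_complex_commute[of c])
  also have "\<dots> = 1" using inv_el_inverse[OF i] ci by simp
  finally have l: "(of_complex (inverse c) * ?I * (of_complex c - v)) * (of_complex c - u) = 1" .
  have "invertible_el (of_complex c - u)" using invertible_elI[OF r l] .
  thus False using c by (simp add: spectrum_iff)
qed

lemma spectrum_conj_involution:
  assumes ss: "s * s = 1"
  shows "c \<in> spectrum (s * a * s) \<longleftrightarrow> c \<in> spectrum a"
proof -
  have iS: "invertible_el s" using ss invertible_el_def by blast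
  have "s * of_complex c * s = of_complex c * (s * s)"
    by (simp only: of_complex_commute[of c s, symmetric] mult.assoc)
  hence e: "of_complex c - s * a * s = s * (of_complex c - a) * s" using ss by (simp add: algebra_simps)
  have conj_back: "s * (s * (of_complex c - a) * s) * s = of_complex c - a"
    by (simp add: mult.assoc[symmetric] ss) (simp add: mult.assoc ss)
  have "invertible_el (s * (of_complex c - a) * s) \<longleftrightarrow> invertible_el (of_complex c - a)"
    using invertible_el_mult iS conj_back by metis
  thus ?thesis by (simp add: spectrum_iff e)
qed

lemma spectrum_quadratic:
  assumes c: "c \<in> spectrum (a * a + of_complex p * a)"
  shows "\<exists>r. r \<in> spectrum a \<and> c = r * r + p * r"
proof -
  define s where "s = csqrt (p * p + 4 * c)"
  have ss: "s * s = p * p + 4 * c" using power2_csqrt[of "p * p + 4 * c"] by (simp add: s_def power2_eq_square)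
  define r1 where "r1 = (s - p) / 2"
  define r2 where "r2 = (- s - p) / 2"
  have sum: "r1 + r2 = - p" by (simp add: r1_def r2_def field_simps)
  have prod: "r1 * r2 = - c" using ss by (simp add: r1_def r2_def field_simps)
  have q1: "c = r1 * r1 + p * r1" using ss by (simp add: r1_def field_simps)
  have q2: "c = r2 * r2 + p * r2" using ss by (simp add: r2_def field_simps)
  have "(a - of_complex r1) * (a - of_complex r2)
      = a * a - (of_complex r1 * a + of_complex r2 * a) + of_complex (r1 * r2)"
    by (simp add: algebra_simps of_complex_commute[of _ a] of_complex_mult)
  also have "of_complex r1 * a + of_complex r2 * a = - (of_complex p * a)" using sum
    by (simp add: distrib_right[symmetric] of_complex_add[symmetric] of_complex_minus)
  finally have f: "(a - of_complex r1) * (a - of_complex r2) = - (of_complex c - (a * a + of_complex p * a))"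
    using prod by (simp add: of_complex_minus)
  have "\<not> (invertible_el (a - of_complex r1) \<and> invertible_el (a - of_complex r2))"
  proof
    assume "invertible_el (a - of_complex r1) \<and> invertible_el (a - of_complex r2)"
    hence "invertible_el (- (of_complex c - (a * a + of_complex p * a)))" using invertible_el_mult f by metis
    thus False using c unfolding spectrum_iff invertible_el_minus_iff by simp
  qed
  hence "r1 \<in> spectrum a \<or> r2 \<in> spectrum a"
    using invertible_el_minus_iff[of "of_complex r1 - a"] invertible_el_minus_iff[of "of_complex r2 - a"]
    by (auto simp: spectrum_iff)
  thus ?thesis using q1 q2 by blast
qed

text \<open>Arens' trick: a spectral value c of a self-adjoint a satisfies
  |c + it|^2 \<le> ||a||^2 + t^2 for every real t, which forces Im c = 0.\<close>

lemma norm_selfadjoint_add_imaginary: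
  assumes sa: "adj a = a"
  shows "norm (a + of_complex (\<i> * complex_of_real t)) ^ 2 \<le> norm a ^ 2 + t ^ 2"
proof -
  let ?u = "of_complex (\<i> * complex_of_real t)" and ?b = "a + of_complex (\<i> * complex_of_real t)"
  have "adj ?b = a - ?u" by (simp add: adj_add adj_of_complex sa of_complex_minus)
  moreover have "(a - ?u) * ?b = a * a + (a * ?u - ?u * a) - ?u * ?u"
    by (simp add: ring_distribs)
  moreover have "\<dots> = a * a + of_complex (complex_of_real (t^2))"
    by (simp add: of_complex_commute[of _ a] of_complex_mult[symmetric] power2_eq_square
        of_complex_minus[symmetric]) (simp add: algebra_simps)
  ultimately have "adj ?b * ?b = a * a + of_complex (complex_of_real (t^2))" by simp
  hence "norm ?b ^ 2 = norm (a * a + of_complex (complex_of_real (t^2)))"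
    using cstar_identity[of ?b] by (simp add: power2_eq_square)
  also have "\<dots> \<le> norm a ^ 2 + t ^ 2"
    using norm_triangle_ineq[of "a*a" "of_complex (complex_of_real (t^2))"] norm_mult_ineq[of a a]
    by (simp add: norm_of_complex power2_eq_square norm_mult abs_mult_self_eq)
  finally show ?thesis .
qed

lemma spectrum_selfadjoint_real:
  assumes sa: "adj a = a" and c: "c \<in> spectrum a"
  shows "c = complex_of_real (Re c)"
proof -
  have key: "2 * t * Im c \<le> norm a ^ 2" for t :: real
  proof -
    let ?b = "a + of_complex (\<i> * complex_of_real t)"
    have "c + \<i> * complex_of_real t \<in> spectrum ?b" using c by (simp add: spectrum_add_of_complex)
    hence "cmod (c + \<i> * complex_of_real t) ^ 2 \<le> norm ?b ^ 2"
      by (simp add: power_mono spectrum_norm_le)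
    also have "\<dots> \<le> norm a ^ 2 + t ^ 2" by (rule norm_selfadjoint_add_imaginary[OF sa])
    finally have "Re c ^ 2 + (Im c + t) ^ 2 \<le> norm a ^ 2 + t ^ 2" by (simp add: cmod_power2)
    hence "Re c ^ 2 + Im c ^ 2 + 2 * t * Im c \<le> norm a ^ 2"
      by (simp add: power2_sum algebra_simps)
    thus ?thesis using zero_le_power2[of "Re c"] zero_le_power2[of "Im c"] by linarith
  qed
  have "Im c = 0"
  proof (rule ccontr)
    assume ne: "Im c \<noteq> 0"
    have "2 * ((norm a ^ 2 + 1) / (2 * Im c)) * Im c = norm a ^ 2 + 1" using ne by simp
    thus False using key[of "(norm a ^ 2 + 1) / (2 * Im c)"] by linarith
  qed
  thus ?thesis by (simp add: complex_eq_iff)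
qed

section \<open>Norm and spectral radius of self-adjoint elements\<close>

lemma geometric_sum_one_minus:
  fixes u :: "'a::ring_1"
  shows "(1 - u) * (\<Sum>m<n. u^m) = 1 - u^n" "(\<Sum>m<n. u^m) * (1 - u) = 1 - u^n"
proof -
  show l: "(1 - u) * (\<Sum>m<n. u^m) = 1 - u^n"
    by (induct n) (simp_all add: distrib_left left_diff_distrib)
  have "u * (\<Sum>m<n. u^m) = (\<Sum>m<n. u^m) * u"
    by (simp add: sum_distrib_left sum_distrib_right power_commutes)
  thus "(\<Sum>m<n. u^m) * (1 - u) = 1 - u^n" using l by (simp add: algebra_simps)
qed

lemma inv_el_one_minus_power:
  assumes "invertible_el (1 - u)"
  shows "(1 - u ^ N) * inv_el (1 - u) = (\<Sum>m<N. u^m)"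
    and "inv_el (1 - u) * (1 - u ^ N) = (\<Sum>m<N. u^m)"
proof -
  note I = inv_el_inverse[OF assms]
  have "(\<Sum>m<N. u^m) = ((\<Sum>m<N. u^m) * (1 - u)) * inv_el (1 - u)" by (simp add: mult.assoc I)
  thus "(1 - u ^ N) * inv_el (1 - u) = (\<Sum>m<N. u^m)" by (simp add: geometric_sum_one_minus)
  have "(\<Sum>m<N. u^m) = inv_el (1 - u) * ((1 - u) * (\<Sum>m<N. u^m))"
    by (simp add: mult.assoc[symmetric] I)
  thus "inv_el (1 - u) * (1 - u ^ N) = (\<Sum>m<N. u^m)" by (simp add: geometric_sum_one_minus)
qed

lemma cis_neq_one: assumes "0 < t" "t < 2 * pi" shows "cis t \<noteq> 1"
proof
  assume "cis t = 1"
  hence "cos t = 1" by (metis cis.sel(1) one_complex.sel(1))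
  then obtain n :: int where n: "t = of_int n * 2 * pi" unfolding cos_one_2pi_int by blast
  hence "0 < real_of_int n" "real_of_int n < 1" using assms by (simp_all add: zero_less_mult_iff)
  thus False by simp
qed

lemma cis_two_pi_div_power_self: "N > 0 \<Longrightarrow> cis (2 * pi / N) ^ N = 1"
  by (simp add: Complex.DeMoivre)

lemma sum_root_of_unity_powers:
  assumes "0 < m" "m < N"
  shows "(\<Sum>j<N. cis (2 * pi / N) ^ (j * m)) = 0"
proof -
  let ?w = "cis (2 * pi / N) ^ m"
  have w: "?w = cis (2 * pi * m / N)" by (simp add: Complex.DeMoivre mult.commute)
  have "0 < 2 * pi * m / N" "2 * pi * m / N < 2 * pi" using assms by (simp_all add: field_simps)
  hence ne: "?w \<noteq> 1" unfolding w by (rule cis_neq_one)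
  have "?w ^ N = 1" using assms cis_two_pi_div_power_self[of N] by (simp add: power_mult[symmetric] mult.commute power_mult)
  hence "(?w - 1) * (\<Sum>j<N. ?w ^ j) = 0" using power_diff_1_eq[of ?w N] by simp
  hence "(\<Sum>j<N. ?w ^ j) = 0" using ne by simp
  thus ?thesis by (simp add: power_mult[symmetric] mult.commute)
qed

lemma cmod_one_minus_cis_le: "cmod (1 - cis t) \<le> \<bar>t\<bar>"
proof -
  have "cmod (1 - cis t) ^ 2 = (1 - cos t)^2 + (sin t)^2" by (simp add: cmod_power2)
  also have "\<dots> = 2 - 2 * cos t" using sin_cos_squared_add[of t] by (simp add: power2_diff)
  also have "\<dots> = 4 * (sin (t/2))^2" using cos_double_sin[of "t/2"] by simp
  also have "\<dots> \<le> 4 * (t/2)^2"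
    using abs_sin_x_le_abs_x[of "t/2"] abs_le_square_iff by (metis mult_left_mono zero_le_numeral)
  also have "\<dots> = \<bar>t\<bar>^2" by (simp add: power2_eq_square)
  finally show ?thesis by (rule power2_le_imp_le) simp
qed

text \<open>Averaging (1 - \<omega>^j y)^-1 over the N-th roots of unity \<omega>^j kills every power y^m
  with 0 < m < N in the geometric expansions, leaving the inverse of 1 - y^N.\<close>

lemma averaged_resolvents_inverse:
  assumes N: "N > 0"
    and inv: "\<And>j. j < N \<Longrightarrow> invertible_el (1 - of_complex (cis (2 * pi / N) ^ j) * y)"
  defines "S \<equiv> of_complex (1 / of_nat N) *
      (\<Sum>j<N. inv_el (1 - of_complex (cis (2 * pi / N) ^ j) * y))"
  shows "(1 - y ^ N) * S = 1" "S * (1 - y ^ N) = 1"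
proof -
  let ?\<omega> = "cis (2 * pi / N)"
  let ?G = "\<lambda>j. \<Sum>m<N. of_complex (?\<omega> ^ (j * m)) * y ^ m"
  have wN: "?\<omega> ^ (j * N) = 1" for j
    by (simp add: mult.commute[of j] power_mult cis_two_pi_div_power_self[OF N])
  have um: "(of_complex (?\<omega> ^ j) * y) ^ m = of_complex (?\<omega> ^ (j * m)) * y ^ m" for j m
    by (simp add: power_of_complex_mult power_mult)
  have each: "(1 - y ^ N) * inv_el (1 - of_complex (?\<omega> ^ j) * y) = ?G j"
    "inv_el (1 - of_complex (?\<omega> ^ j) * y) * (1 - y ^ N) = ?G j" if "j < N" for j
    using inv_el_one_minus_power[OF inv[OF that], of N] by (simp_all add: um wN)
  have "(\<Sum>j<N. ?G j) = (\<Sum>m<N. of_complex (\<Sum>j<N. ?\<omega> ^ (j * m)) * y ^ m)"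
    by (subst sum.swap) (simp add: of_complex_sum sum_distrib_right)
  also have "\<dots> = (\<Sum>m<N. if m = 0 then of_nat N else 0)"
    using sum_root_of_unity_powers[of _ N]
    by (intro sum.cong) (simp_all add: of_complex_of_real[of "real N", simplified])
  finally have tot: "(\<Sum>j<N. ?G j) = of_nat N" using N by (simp add: sum.delta)
  have Nc: "of_complex (1 / of_nat N) * (of_nat N :: 'a) = 1"
    using N of_complex_of_real[of "real N", where 'a='a] of_complex_mult[of "1 / of_nat N" "of_nat N", where 'a='a]
    by simp
  have "(1 - y ^ N) * S = of_complex (1 / of_nat N) * (\<Sum>j<N. (1 - y ^ N) * inv_el (1 - of_complex (?\<omega> ^ j) * y))"
    unfolding S_def by (simp add: mult.assoc[symmetric] of_complex_commute[of _ "1 - y ^ N"] sum_distrib_left)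
  thus "(1 - y ^ N) * S = 1" using each(1) tot Nc by simp
  have "S * (1 - y ^ N) = of_complex (1 / of_nat N) * (\<Sum>j<N. inv_el (1 - of_complex (?\<omega> ^ j) * y) * (1 - y ^ N))"
    unfolding S_def by (simp add: mult.assoc sum_distrib_right)
  thus "S * (1 - y ^ N) = 1" using each(2) tot Nc by simp
qed

lemma continuous_on_inv_el: "continuous_on {a. invertible_el a} inv_el"
  unfolding continuous_on_iff
proof (intro ballI allI impI)
  fix a0 :: 'a and e :: real
  assume a0: "a0 \<in> {a. invertible_el a}" and e: "0 < e"
  define K where "K = norm (inv_el a0) + 1"
  have K: "0 < K" "norm (inv_el a0) \<le> K" by (simp_all add: K_def add_nonneg_pos)
  define d where "d = min (1 / (2 * K)) (e / (2 * K * K))"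
  show "\<exists>d>0. \<forall>a\<in>{a. invertible_el a}. dist a a0 < d \<longrightarrow> dist (inv_el a) (inv_el a0) < e"
  proof (intro exI conjI ballI impI)
    show "0 < d" using K e by (simp add: d_def)
    fix a assume a: "a \<in> {a. invertible_el a}" and da: "dist a a0 < d"
    let ?h = "a0 - a"
    have nh: "norm ?h < d" using da by (simp add: dist_norm norm_minus_commute)
    have "norm (inv_el a0) * norm ?h \<le> K * d" using K nh by (intro mult_mono) auto
    also have "\<dots> \<le> 1/2" using K by (simp add: d_def min_def field_simps)
    finally have sm: "norm (inv_el a0) * norm ?h \<le> 1/2" .
    have "norm (inv_el a) \<le> norm (inv_el a0) / (1 - norm (inv_el a0) * norm ?h)"
      using a0 sm norm_inv_el_perturbation_le[of a0 ?h] by simp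
    also have "\<dots> \<le> norm (inv_el a0) / (1/2)" using sm by (intro divide_left_mono) auto
    finally have na: "norm (inv_el a) \<le> 2 * K" using K by simp
    have "norm (inv_el a - inv_el a0) = norm (inv_el a * ?h * inv_el a0)"
      using inv_el_diff[of a a0] a a0 by simp
    also have "\<dots> \<le> norm (inv_el a * ?h) * norm (inv_el a0)" by (rule norm_mult_ineq)
    also have "\<dots> \<le> norm (inv_el a) * norm ?h * norm (inv_el a0)"
      by (intro mult_right_mono norm_mult_ineq norm_ge_zero)
    also have "\<dots> \<le> (2 * K) * norm ?h * K" using na K by (intro mult_mono) auto
    also have "\<dots> < (2 * K) * d * K" using nh K by simp
    also have "\<dots> \<le> e" using K e by (simp add: d_def min_def field_simps)
    finally show "dist (inv_el a) (inv_el a0) < e" by (simp add: dist_norm)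
  qed
qed

lemma bounded_linear_scaleC_left: "bounded_linear (\<lambda>z. scaleC z x)"
  by (rule bounded_linear_intro[where K = "norm x"])
    (simp_all add: scaleC_add_left scaleR_scaleC scaleC_scaleC norm_scaleC scaleR_conv_of_real)

lemma resolvent_bounded_on_circle:
  assumes inv: "\<And>z. cmod z = 1 \<Longrightarrow> invertible_el (1 - of_complex z * x)"
  obtains M where "M > 0" "\<And>z. cmod z = 1 \<Longrightarrow> norm (inv_el (1 - of_complex z * x)) \<le> M"
proof -
  have "continuous_on (sphere 0 1) (\<lambda>z. 1 - scaleC z x)"
    by (intro continuous_intros bounded_linear.continuous_on[OF bounded_linear_scaleC_left])
  hence "continuous_on (sphere 0 1) (\<lambda>z. inv_el (1 - of_complex z * x))"
    by (intro continuous_on_compose2[OF continuous_on_inv_el])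
      (use inv in \<open>auto simp: scaleC_conv_of_complex_mult\<close>)
  hence "bounded ((\<lambda>z. inv_el (1 - of_complex z * x)) ` sphere 0 1)"
    by (intro compact_imp_bounded compact_continuous_image compact_sphere)
  thus ?thesis using that unfolding bounded_pos by auto
qed

lemma resolvent_lipschitz:
  assumes "invertible_el (1 - of_complex z * x)" "invertible_el (1 - of_complex w * x)"
    and "norm (inv_el (1 - of_complex z * x)) \<le> M" "norm (inv_el (1 - of_complex w * x)) \<le> M"
  shows "norm (inv_el (1 - of_complex z * x) - inv_el (1 - of_complex w * x))
    \<le> M * M * (cmod (z - w) * norm x)"
proof -
  let ?Rz = "inv_el (1 - of_complex z * x)" and ?Rw = "inv_el (1 - of_complex w * x)"
  have "(1 - of_complex w * x) - (1 - of_complex z * x) = of_complex (z - w) * x"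
    by (simp add: of_complex_diff algebra_simps)
  hence "norm (?Rz - ?Rw) = norm (?Rz * (of_complex (z - w) * x) * ?Rw)"
    using inv_el_diff[OF assms(1,2)] by simp
  also have "\<dots> \<le> norm (?Rz * (of_complex (z - w) * x)) * norm ?Rw" by (rule norm_mult_ineq)
  also have "\<dots> \<le> norm ?Rz * norm (of_complex (z - w) * x) * norm ?Rw"
    by (intro mult_right_mono norm_mult_ineq norm_ge_zero)
  also have "\<dots> \<le> M * (cmod (z - w) * norm x) * M"
    using assms(3,4) order_trans[OF norm_ge_zero assms(3)]
    by (intro mult_mono) (auto simp: norm_of_complex_mult)
  finally show ?thesis by (simp add: algebra_simps)
qed

lemma norm_average_diff_le:
  assumes N: "N > 0" and C: "\<And>j. j < N \<Longrightarrow> norm (f j - g j) \<le> C"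
  shows "norm (of_complex (1 / of_nat N) * (\<Sum>j<N. f j) - of_complex (1 / of_nat N) * (\<Sum>j<N. g j)) \<le> C"
proof -
  have "norm (\<Sum>j<N. f j - g j) \<le> (\<Sum>j<N. norm (f j - g j))" by (rule norm_sum)
  also have "\<dots> \<le> of_nat N * C" using sum_bounded_above[of "{..<N}" "\<lambda>j. norm (f j - g j)" C] C
    by simp
  finally have "norm (\<Sum>j<N. f j - g j) / N \<le> C" using N by (simp add: divide_le_eq mult.commute)
  moreover have "of_complex (1 / of_nat N) * (\<Sum>j<N. f j) - of_complex (1 / of_nat N) * (\<Sum>j<N. g j)
      = of_complex (1 / of_nat N) * (\<Sum>j<N. f j - g j)"
    by (simp add: right_diff_distrib sum_subtractf)
  ultimately show ?thesis by (simp add: norm_of_complex_mult norm_divide)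
qed

text \<open>If A and B invert 1 - y and 1 + y, then A - B = 2yAB and AB inverts 1 - y^2,
  so AB is within ||A - B||/2 of 1 when ||y|| \<le> 1.\<close>

lemma norm_square_lt_one_if_inverses_close:
  fixes y A B :: "'a::cstar_algebra"
  assumes A: "(1 - y) * A = 1" "A * (1 - y) = 1" and B: "(1 + y) * B = 1" "B * (1 + y) = 1"
    and ny: "norm y \<le> 1" and AB: "norm (A - B) < 1 / 2"
  shows "norm (y * y) < 1"
proof -
  have "(1 - y) * y = y * (1 - y)" by (simp add: algebra_simps)
  hence Ay: "A * y = y * A"
    using inv_el_commute[OF invertible_elI[OF A]] inv_el_unique[OF A] by simp
  have "A = A * ((1 + y) * B)" using B by simp
  hence a1: "A = A * B + A * y * B" by (simp add: algebra_simps)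
  have "B = (A * (1 - y)) * B" using A by simp
  hence b1: "B = A * B - A * y * B" by (simp add: algebra_simps)
  define U where "U = A * B"
  have "A * y * B = y * U" unfolding U_def using Ay by (simp add: mult.assoc)
  hence "A - B = 2 *\<^sub>R (y * U)" using arg_cong2[where f = "(-)", OF a1 b1] by (simp add: scaleR_2)
  hence nw: "norm (y * U) = norm (A - B) / 2" by simp
  define V where "V = 1 - y * y"
  have "V = (1 + y) * (1 - y)" by (simp add: V_def algebra_simps)
  hence "V * U = (1 + y) * ((1 - y) * A) * B" by (simp add: U_def mult.assoc)
  hence VU: "V * U = 1" using A B by simp
  hence "U - 1 = y * (y * U)" by (simp add: V_def algebra_simps mult.assoc)
  hence "norm (U - 1) \<le> norm y * norm (y * U)" using norm_mult_ineq[of y "y * U"] by simp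
  also have "\<dots> \<le> norm (y * U)" using ny by (simp add: mult_left_le_one_le)
  finally have eps: "norm (1 - U) < 1 / 4" using nw AB by (simp add: norm_minus_commute)
  have "V - 1 = V * (1 - U)" using VU by (simp add: right_diff_distrib)
  hence "norm (V - 1) \<le> norm V * norm (1 - U)" by (simp add: norm_mult_ineq)
  also have "\<dots> \<le> (1 + norm (V - 1)) * norm (1 - U)"
    using norm_triangle_ineq[of 1 "V - 1"] by (intro mult_right_mono) auto
  also have "\<dots> \<le> (1 + norm (V - 1)) * (1 / 4)" using eps by (intro mult_left_mono) auto
  finally have "norm (V - 1) < 1" by (simp add: algebra_simps)
  thus ?thesis by (simp add: V_def)
qed

lemma norm_power_two_power_selfadjoint:
  assumes "adj x = x" shows "norm (x ^ (2 ^ k)) = norm x ^ (2 ^ k)"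
proof (induct k)
  case (Suc k)
  have "x ^ (2 ^ Suc k) = adj (x ^ (2 ^ k)) * x ^ (2 ^ k)"
    by (simp add: adj_power assms power_add[symmetric] mult_2)
  thus ?case by (simp add: cstar_identity Suc power_add mult_2)
qed simp

lemma invertible_one_minus_of_complex_mult_iff:
  assumes "z \<noteq> 0"
  shows "invertible_el (1 - of_complex z * x) \<longleftrightarrow> inverse z \<notin> spectrum x"
proof -
  have "1 - of_complex z * x = of_complex z * (of_complex (inverse z) - x)"
    by (simp add: right_diff_distrib mult.assoc[symmetric] of_complex_mult[symmetric] assms)
  thus ?thesis by (simp add: spectrum_iff invertible_of_complex_mult_iff[OF assms])
qed

text \<open>B averages the resolvents at the N-th roots of unity rotated by e^(i pi/N); it inverts
  1 + x^N, and the rotation moves each sample point by at most pi/N.\<close>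

lemma inverses_one_minus_plus_power_close:
  assumes inv: "\<And>z. cmod z = 1 \<Longrightarrow> invertible_el (1 - of_complex z * x)"
    and M: "\<And>z. cmod z = 1 \<Longrightarrow> norm (inv_el (1 - of_complex z * x)) \<le> M" and N0: "N > 0"
  obtains A B where "(1 - x ^ N) * A = 1" "A * (1 - x ^ N) = 1" "(1 + x ^ N) * B = 1" "B * (1 + x ^ N) = 1"
    "norm (A - B) \<le> M * M * (pi / N * norm x)"
proof -
  define \<omega> where "\<omega> = cis (2 * pi / N)"
  define \<eta> where "\<eta> = cis (pi / N)"
  have etaN: "\<eta> ^ N = -1" using N0 by (simp add: \<eta>_def Complex.DeMoivre)
  have unit: "cmod (\<omega> ^ j) = 1" "cmod (\<omega> ^ j * \<eta>) = 1" for j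
    by (simp_all add: \<omega>_def \<eta>_def norm_power norm_mult)
  have twist: "of_complex (\<omega> ^ j) * (of_complex \<eta> * x) = of_complex (\<omega> ^ j * \<eta>) * x" for j
    by (simp add: of_complex_mult mult.assoc)
  define A where "A = of_complex (1 / of_nat N) * (\<Sum>j<N. inv_el (1 - of_complex (\<omega> ^ j) * x))"
  define B where "B = of_complex (1 / of_nat N) * (\<Sum>j<N. inv_el (1 - of_complex (\<omega> ^ j * \<eta>) * x))"
  have "invertible_el (1 - of_complex (\<omega> ^ j) * x)" if "j < N" for j using inv unit by blast
  from averaged_resolvents_inverse[OF N0 this[unfolded \<omega>_def]]
  have A: "(1 - x ^ N) * A = 1" "A * (1 - x ^ N) = 1" unfolding A_def \<omega>_def by simp_all
  have "invertible_el (1 - of_complex (\<omega> ^ j) * (of_complex \<eta> * x))" if "j < N" for j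
    using inv unit twist by metis
  from averaged_resolvents_inverse[OF N0 this[unfolded \<omega>_def]]
  have "(1 - (of_complex \<eta> * x) ^ N) * B = 1" "B * (1 - (of_complex \<eta> * x) ^ N) = 1"
    unfolding B_def \<omega>_def[symmetric] twist by simp_all
  moreover have "(of_complex \<eta> * x) ^ N = - (x ^ N)"
    by (simp add: power_of_complex_mult etaN of_complex_minus)
  ultimately have B: "(1 + x ^ N) * B = 1" "B * (1 + x ^ N) = 1" by simp_all
  have "norm (inv_el (1 - of_complex (\<omega> ^ j) * x) - inv_el (1 - of_complex (\<omega> ^ j * \<eta>) * x))
      \<le> M * M * (pi / N * norm x)" for j
  proof -
    have "\<omega> ^ j - \<omega> ^ j * \<eta> = \<omega> ^ j * (1 - \<eta>)" by (simp add: right_diff_distrib)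
    hence "cmod (\<omega> ^ j - \<omega> ^ j * \<eta>) \<le> pi / N"
      using cmod_one_minus_cis_le[of "pi / N"] by (simp add: norm_mult unit \<eta>_def)
    hence "M * M * (cmod (\<omega> ^ j - \<omega> ^ j * \<eta>) * norm x) \<le> M * M * (pi / N * norm x)"
      by (intro mult_left_mono mult_right_mono) simp_all
    moreover have "norm (inv_el (1 - of_complex (\<omega> ^ j) * x) - inv_el (1 - of_complex (\<omega> ^ j * \<eta>) * x))
        \<le> M * M * (cmod (\<omega> ^ j - \<omega> ^ j * \<eta>) * norm x)"
      using inv unit M by (intro resolvent_lipschitz) auto
    ultimately show ?thesis by linarith
  qed
  hence "norm (A - B) \<le> M * M * (pi / N * norm x)"
    unfolding A_def B_def using N0 by (intro norm_average_diff_le)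
  thus ?thesis using that A B by blast
qed

lemma selfadjoint_spectrum_meets_circle:
  assumes sa: "adj x = x" and n1: "norm x = 1"
  shows "\<exists>c\<in>spectrum x. cmod c = 1"
proof (rule ccontr)
  assume no: "\<not> ?thesis"
  have inv: "invertible_el (1 - of_complex z * x)" if "cmod z = 1" for z
  proof -
    have "z \<noteq> 0" "cmod (inverse z) = 1" using that by (auto simp: norm_inverse)
    thus ?thesis using no invertible_one_minus_of_complex_mult_iff[of z x] by blast
  qed
  obtain M where M: "M > 0" "\<And>z. cmod z = 1 \<Longrightarrow> norm (inv_el (1 - of_complex z * x)) \<le> M"
    using resolvent_bounded_on_circle[of x] inv by metis
  obtain k where k: "8 * M * M < 2 ^ k" using real_arch_pow[of 2 "8 * M * M"] by auto
  define N :: nat where "N = 2 ^ k"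
  have N0: "N > 0" by (simp add: N_def)
  obtain A B where A: "(1 - x ^ N) * A = 1" "A * (1 - x ^ N) = 1"
    and B: "(1 + x ^ N) * B = 1" "B * (1 + x ^ N) = 1" and AB: "norm (A - B) \<le> M * M * (pi / N)"
    using inverses_one_minus_plus_power_close[OF inv M(2) N0] n1 by auto
  have "M * M * pi < M * M * 4" using M pi_less_4 by simp
  also have "\<dots> < N / 2" using k by (simp add: N_def)
  finally have "M * M * (pi / N) < 1 / 2" using N0 by (simp add: field_simps)
  hence "norm (A - B) < 1 / 2" using AB by linarith
  hence "norm (x ^ N * x ^ N) < 1"
    using norm_square_lt_one_if_inverses_close[OF A B] norm_power_ineq[of x N] n1 by simp
  moreover have "x ^ N * x ^ N = x ^ (2 ^ Suc k)" by (simp add: N_def power_add[symmetric] mult_2)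
  ultimately show False using norm_power_two_power_selfadjoint[OF sa, of "Suc k"] n1 by simp
qed

lemma norm_selfadjoint_le_spectral_bound:
  assumes sa: "adj b = b" and r: "0 \<le> \<rho>" and sp: "\<And>c. c \<in> spectrum b \<Longrightarrow> cmod c \<le> \<rho>"
  shows "norm b \<le> \<rho>"
proof (rule ccontr)
  assume "\<not> norm b \<le> \<rho>"
  hence gt: "\<rho> < norm b" by simp
  hence nb: "norm b > 0" using r by linarith
  define d :: complex where "d = complex_of_real (1 / norm b)"
  have d0: "d \<noteq> 0" using nb by (simp add: d_def)
  have "adj (of_complex d * b) = of_complex d * b"
    by (simp add: adj_mult adj_of_complex sa d_def of_complex_commute)
  moreover have "norm (of_complex d * b) = 1" using nb by (simp add: d_def norm_of_complex_mult norm_divide)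
  ultimately obtain c where c: "c \<in> spectrum (of_complex d * b)" "cmod c = 1"
    using selfadjoint_spectrum_meets_circle by blast
  have "cmod (c / d) \<le> \<rho>" using c spectrum_of_complex_mult[OF d0] sp by blast
  moreover have "cmod (c / d) = norm b" using c nb by (simp add: d_def norm_divide norm_mult)
  ultimately show False using gt by simp
qed

section \<open>The positive cone\<close>

lemma positive_iff: "positive a \<longleftrightarrow> adj a = a \<and> (\<forall>c\<in>spectrum a. 0 \<le> Re c)"
proof
  assume A: "adj a = a \<and> (\<forall>c\<in>spectrum a. 0 \<le> Re c)"
  have "c \<in> complex_of_real ` {0..}" if c: "c \<in> spectrum a" for c
    using spectrum_selfadjoint_real[OF conjunct1[OF A] c] A c by (metis atLeast_iff image_eqI)
  thus "positive a" using A unfolding positive_def selfadjoint_def by auto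
qed (auto simp: positive_def selfadjoint_def)

lemma positive_selfadjoint: "positive a \<Longrightarrow> adj a = a"
  by (simp add: positive_iff)

lemma positive_antisym:
  assumes "positive a" "positive (- a)" shows "a = 0"
proof -
  have sa: "adj a = a" using assms positive_selfadjoint by blast
  have "norm a \<le> 0"
  proof (rule norm_selfadjoint_le_spectral_bound[OF sa order_refl])
    fix c assume c: "c \<in> spectrum a"
    have "- c \<in> spectrum (- a)" using c by (simp add: spectrum_uminus)
    hence "0 \<le> Re (- c)" using assms(2) positive_iff by blast
    moreover have "0 \<le> Re c" using c assms(1) positive_iff by blast
    ultimately have "c = 0" using spectrum_selfadjoint_real[OF sa c] by (simp add: complex_eq_iff)
    thus "cmod c \<le> 0" by simp
  qed
  thus ?thesis by simp
qed

text \<open>For self-adjoint a with ||a|| \<le> t, positivity means ||t - a|| \<le> t; this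
  characterisation makes the positive cone closed under addition.\<close>

lemma positive_if_norm_shift_le:
  assumes sa: "adj a = a" and t: "norm (of_complex (complex_of_real t) - a) \<le> t"
  shows "positive a"
  unfolding positive_iff
proof (intro conjI ballI sa)
  fix c assume c: "c \<in> spectrum a"
  hence "complex_of_real t - c \<in> spectrum (of_complex (complex_of_real t) - a)"
    by (simp add: spectrum_of_complex_diff)
  hence "cmod (complex_of_real t - c) \<le> t" using spectrum_norm_le t by (meson order_trans)
  hence "\<bar>Re (complex_of_real t - c)\<bar> \<le> t" using abs_Re_le_cmod order_trans by blast
  thus "0 \<le> Re c" by simp
qed

lemma norm_shift_le_if_positive:
  assumes p: "positive a" and t: "norm a \<le> t"
  shows "norm (of_complex (complex_of_real t) - a) \<le> t"
proof (rule norm_selfadjoint_le_spectral_bound)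
  have sa: "adj a = a" using p positive_selfadjoint by blast
  show "adj (of_complex (complex_of_real t) - a) = of_complex (complex_of_real t) - a"
    by (simp add: adj_diff adj_of_complex sa)
  show "0 \<le> t" using t norm_ge_zero order_trans by blast
  fix c assume "c \<in> spectrum (of_complex (complex_of_real t) - a)"
  hence c': "complex_of_real t - c \<in> spectrum a" by (simp add: spectrum_of_complex_diff)
  have "0 \<le> Re (complex_of_real t - c)" using p c' positive_iff by blast
  moreover have "cmod (complex_of_real t - c) \<le> t" using spectrum_norm_le[OF c'] t by simp
  moreover have "Im c = 0" using spectrum_selfadjoint_real[OF sa c'] by (simp add: complex_eq_iff)
  ultimately have "0 \<le> t - Re c" "t - Re c \<le> t" "Im c = 0"
    using abs_Re_le_cmod[of "complex_of_real t - c"] by auto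
  thus "cmod c \<le> t" by (simp add: cmod_def)
qed

lemma add_positive_positive:
  assumes "positive a" "positive b" shows "positive (a + b)"
proof (rule positive_if_norm_shift_le)
  show "adj (a + b) = a + b" using assms positive_selfadjoint adj_add by metis
  have "of_complex (complex_of_real (norm a + norm b)) - (a + b)
      = (of_complex (complex_of_real (norm a)) - a) + (of_complex (complex_of_real (norm b)) - b)"
    by (simp add: of_complex_add)
  thus "norm (of_complex (complex_of_real (norm a + norm b)) - (a + b)) \<le> norm a + norm b"
    using norm_triangle_ineq norm_shift_le_if_positive[OF assms(1) order_refl]
      norm_shift_le_if_positive[OF assms(2) order_refl]
    by (smt (verit))
qed

lemma positive_scaleR:
  assumes p: "positive a" and r: "0 \<le> r"
  shows "positive (scaleR r a)"
proof (cases "r = 0")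
  case True
  thus ?thesis by (simp add: positive_iff spectrum_zero)
next
  case False
  hence r0: "complex_of_real r \<noteq> 0" by simp
  have sa: "adj a = a" using p positive_selfadjoint by blast
  show ?thesis unfolding positive_iff
  proof (intro conjI ballI)
    show "adj (scaleR r a) = scaleR r a" by (simp add: adj_scaleR sa)
    fix c assume "c \<in> spectrum (scaleR r a)"
    hence "c / complex_of_real r \<in> spectrum a"
      using spectrum_of_complex_mult[OF r0, of c a] by (simp add: of_complex_of_real_mult)
    hence "0 \<le> Re (c / complex_of_real r)" using p positive_iff by blast
    thus "0 \<le> Re c" using r False by (simp add: Re_divide_of_real zero_le_divide_iff)
  qed
qed

lemma positive_half: "positive (x + x) \<Longrightarrow> positive x"
  using positive_scaleR[of "x + x" "1/2"] by (simp add: scaleR_2[symmetric])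

lemma positive_orthogonal_summand:
  assumes p: "positive (u + v)" and uv: "u * v = 0" and vu: "v * u = 0" and sa: "adj u = u"
  shows "positive u"
  unfolding positive_iff
proof (intro conjI ballI sa)
  fix c assume c: "c \<in> spectrum u"
  show "0 \<le> Re c"
  proof (cases "c = 0")
    case False
    thus ?thesis using spectrum_orthogonal_add[OF uv vu False c] p positive_iff by blast
  qed simp
qed

text \<open>The symmetry s = e - (1 - e) satisfies s z s + z = 2 (e z e + (1 - e) z (1 - e)),
  and e z e is an orthogonal summand of the right-hand side.\<close>

lemma positive_compress:
  assumes p: "positive z" and e: "projection e"
  shows "positive (e * z * e)"
proof -
  have ee: "e * e = e" and ae: "adj e = e" using e by (auto simp: projection_def)
  have sz: "adj z = z" using p positive_selfadjoint by blast
  define f where "f = 1 - e"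
  have ef: "e * f = 0" "f * e = 0" by (simp_all add: f_def algebra_simps ee)
  define s where "s = e - f"
  have ss: "s * s = 1" by (simp add: s_def f_def algebra_simps ee)
  have as: "adj s = s" by (simp add: s_def f_def adj_diff ae)
  have "positive (s * z * s)"
    using p spectrum_conj_involution[OF ss] by (simp add: positive_iff adj_mult as sz mult.assoc)
  hence "positive (z + s * z * s)" by (rule add_positive_positive[OF p])
  moreover have "z = (e + f) * z * (e + f)" by (simp add: f_def)
  hence "z + s * z * s = (e * z * e + f * z * f) + (e * z * e + f * z * f)"
    unfolding s_def by (simp add: algebra_simps)
  ultimately have "positive (e * z * e + f * z * f)" using positive_half by simp
  moreover have "(e * z * e) * (f * z * f) = 0" "(f * z * f) * (e * z * e) = 0"
    by (simp_all add: mult.assoc) (simp_all add: mult.assoc[symmetric] ef)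
  moreover have "adj (e * z * e) = e * z * e" by (simp add: adj_mult ae sz mult.assoc)
  ultimately show ?thesis by (rule positive_orthogonal_summand)
qed

lemma positive_adj_mult_self_swap:
  assumes p: "positive (w * adj w)"
  shows "positive (adj w * w)"
  unfolding positive_iff
proof (intro conjI ballI)
  show "adj (adj w * w) = adj w * w" by (simp add: adj_mult adj_adj)
  fix c assume c: "c \<in> spectrum (adj w * w)"
  show "0 \<le> Re c"
  proof (cases "c = 0")
    case False
    thus ?thesis using c spectrum_mult_commute[OF False] p positive_iff by blast
  qed simp
qed

lemma positive_square:
  assumes sa: "adj y = y" shows "positive (y * y)"
  unfolding positive_iff
proof (intro conjI ballI)
  show "adj (y * y) = y * y" by (simp add: adj_mult sa)
  fix c assume "c \<in> spectrum (y * y)"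
  then obtain r where r: "r \<in> spectrum y" "c = r * r"
    using spectrum_quadratic[of c y 0] by auto
  have "r = complex_of_real (Re r)" by (rule spectrum_selfadjoint_real[OF sa r(1)])
  hence "c = complex_of_real (Re r * Re r)" using r(2) by (metis of_real_mult)
  thus "0 \<le> Re c" by simp
qed

lemma positive_minus_square:
  assumes p: "positive y" and p1: "positive (1 - y)"
  shows "positive (y - y * y)"
  unfolding positive_iff
proof (intro conjI ballI)
  have sa: "adj y = y" using p positive_selfadjoint by blast
  show "adj (y - y * y) = y - y * y" by (simp add: adj_diff adj_mult sa)
  fix c assume "c \<in> spectrum (y - y * y)"
  hence "- c \<in> spectrum (y * y + of_complex (- 1) * y)"
    using spectrum_uminus[of "- c" "y - y * y"] by (simp add: of_complex_minus)
  then obtain r where r: "r \<in> spectrum y" "- c = r * r + (- 1) * r" using spectrum_quadratic by blast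
  have real: "r = complex_of_real (Re r)" using spectrum_selfadjoint_real[OF sa r(1)] .
  have "0 \<le> Re r" using p r(1) positive_iff by blast
  moreover have "1 - r \<in> spectrum (of_complex 1 - y)" using r(1) spectrum_of_complex_diff[of "1 - r" 1 y] by simp
  hence "Re r \<le> 1" using p1 positive_iff by fastforce
  moreover have "c = r - r * r" using r(2) by (simp add: algebra_simps)
  hence "c = complex_of_real (Re r - Re r * Re r)" using real by (metis of_real_diff of_real_mult)
  hence "Re c = Re r * (1 - Re r)" by (simp only: Re_complex_of_real) (simp add: algebra_simps)
  ultimately show "0 \<le> Re c" by simp
qed

lemma orthogonal_idempotents_combination_mult:
  assumes "E * E = E" "F * F = F" "E * F = 0" "F * E = 0"
  shows "(of_complex x * F + of_complex y * E) * (of_complex u * F + of_complex v * E)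
    = of_complex (x * u) * F + of_complex (y * v) * E"
proof -
  have m: "of_complex a * P * (of_complex b * Q) = of_complex (a * b) * (P * Q)" for a b P Q
    by (simp add: of_complex_left_commute[of b P Q, symmetric] mult.assoc of_complex_mult)
  show ?thesis by (simp add: distrib_left distrib_right m assms)
qed

lemma positive_projection_combination:
  assumes e: "projection e" and a: "0 \<le> \<alpha>" and ab: "0 \<le> \<alpha> + \<beta>"
  shows "positive (scaleR \<alpha> 1 + scaleR \<beta> e)"
  unfolding positive_iff
proof (intro conjI ballI)
  have ee: "e * e = e" and ae: "adj e = e" using e by (auto simp: projection_def)
  let ?a = "complex_of_real \<alpha>" and ?b = "complex_of_real \<beta>"
  have x: "scaleR \<alpha> 1 + scaleR \<beta> e = of_complex ?a * (1 - e) + of_complex (?a + ?b) * e"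
    by (simp add: of_complex_of_real_mult[symmetric] of_complex_add algebra_simps)
  show "adj (scaleR \<alpha> 1 + scaleR \<beta> e) = scaleR \<alpha> 1 + scaleR \<beta> e"
    by (simp add: adj_add adj_scaleR ae)
  fix c assume c: "c \<in> spectrum (scaleR \<alpha> 1 + scaleR \<beta> e)"
  have "c = ?a \<or> c = ?a + ?b"
  proof (rule ccontr)
    assume ne: "\<not> (c = ?a \<or> c = ?a + ?b)"
    define g1 where "g1 = c - ?a"
    define g2 where "g2 = c - (?a + ?b)"
    have g0: "g1 \<noteq> 0" "g2 \<noteq> 0" using ne by (auto simp: g1_def g2_def)
    have "(1 - e) * (1 - e) = 1 - e" "e * (1 - e) = 0" "(1 - e) * e = 0" by (simp_all add: algebra_simps ee)
    note bm = orthogonal_idempotents_combination_mult[OF ee this]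
    have "of_complex c - (scaleR \<alpha> 1 + scaleR \<beta> e)
        = of_complex g1 * (1 - e) + of_complex g2 * e"
      unfolding x g1_def g2_def by (simp add: of_complex_diff algebra_simps)
    moreover have "invertible_el (of_complex g1 * (1 - e) + of_complex g2 * e)"
    proof (rule invertible_elI)
      let ?P = "of_complex (inverse g1) * (1 - e) + of_complex (inverse g2) * e"
      show "(of_complex g1 * (1 - e) + of_complex g2 * e) * ?P = 1"
        "?P * (of_complex g1 * (1 - e) + of_complex g2 * e) = 1"
        by (simp_all only: bm) (simp_all add: g0)
    qed
    ultimately show False using c by (simp add: spectrum_iff)
  qed
  thus "0 \<le> Re c" using a ab by auto
qed

lemma projection_one_minus: "projection e \<Longrightarrow> projection (1 - e)"
  by (simp add: projection_def algebra_simps adj_diff)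

lemma positive_projection: "projection e \<Longrightarrow> positive e"
  using positive_projection_combination[of e 0 1] by simp

lemma positive_one_minus_projection: "projection e \<Longrightarrow> positive (1 - e)"
  using positive_projection_combination[of e 1 "-1"] by simp

section \<open>Joins and meets with 1/2 in the effect algebra\<close>

lemma unit_interval_iff: "a \<in> unit_interval \<longleftrightarrow> positive a \<and> positive (1 - a)"
  by (auto simp: unit_interval_def cle_def selfadjoint_def positive_iff)

lemma is_sup1_unique: "is_sup1 S x \<Longrightarrow> is_sup1 S y \<Longrightarrow> x = y"
  unfolding is_sup1_def cle_def using positive_antisym[of "y - x"] by simp

lemma is_inf1_unique: "is_inf1 S x \<Longrightarrow> is_inf1 S y \<Longrightarrow> x = y"
  unfolding is_inf1_def cle_def using positive_antisym[of "y - x"] by simp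

lemma compression_zero_imp_mult_zero:
  assumes z: "z \<in> unit_interval" and e: "projection e" and eze: "e * z * e = 0"
  shows "z * e = 0"
proof -
  have ae: "adj e = e" using e by (simp add: projection_def)
  have sz: "adj z = z" using z by (simp add: unit_interval_iff positive_selfadjoint)
  have "positive (z - z * z)" using z positive_minus_square unit_interval_iff by blast
  hence "positive (e * (z - z * z) * e)" by (rule positive_compress[OF _ e])
  moreover have "e * (z - z * z) * e = - (e * (z * z) * e)" using eze by (simp add: algebra_simps)
  moreover have "positive (e * (z * z) * e)" by (rule positive_compress[OF positive_square[OF sz] e])
  ultimately have "e * (z * z) * e = 0" using positive_antisym by metis
  moreover have "e * (z * z) * e = adj (z * e) * (z * e)" by (simp add: adj_mult ae sz mult.assoc)
  ultimately show ?thesis using adj_mult_self_eq_zeroD by metis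
qed

lemma effect_below_projection:
  assumes p: "projection p" and y: "y \<in> unit_interval" and yp: "cle y p"
  shows "y * p = y" "p * y = y"
proof -
  have pp: "p * p = p" and ap: "adj p = p" using p by (auto simp: projection_def)
  have sy: "adj y = y" using y by (simp add: unit_interval_iff positive_selfadjoint)
  have r: "projection (1 - p)" by (rule projection_one_minus[OF p])
  have "positive ((1 - p) * (p - y) * (1 - p))" using yp positive_compress[OF _ r] by (simp add: cle_def)
  moreover have "(1 - p) * (p - y) * (1 - p) = - ((1 - p) * y * (1 - p))" by (simp add: algebra_simps pp)
  moreover have "positive ((1 - p) * y * (1 - p))"
    using y positive_compress[OF _ r] by (simp add: unit_interval_iff)
  ultimately have "(1 - p) * y * (1 - p) = 0" using positive_antisym by metis
  hence "y * (1 - p) = 0" by (rule compression_zero_imp_mult_zero[OF y r])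
  thus yp1: "y * p = y" by (simp add: algebra_simps)
  have "adj (y * p) = adj y" using yp1 by simp
  thus "p * y = y" by (simp add: adj_mult ap sy)
qed

lemma effect_above_projection:
  assumes q: "projection q" and y: "y \<in> unit_interval" and qy: "cle q y"
  shows "y * q = q" "q * y = q"
proof -
  have "1 - y \<in> unit_interval" using y by (simp add: unit_interval_iff)
  moreover have "cle (1 - y) (1 - q)" using qy by (simp add: cle_def)
  ultimately have "(1 - y) * (1 - q) = 1 - y" "(1 - q) * (1 - y) = 1 - y"
    using effect_below_projection[OF projection_one_minus[OF q]] by blast+
  moreover have "q * q = q" using q by (simp add: projection_def)
  ultimately show "y * q = q" "q * y = q" by (simp_all add: algebra_simps)
qed

lemma scaleR_half_add_half: "scaleR (1/2) x + scaleR (1/2) x = (x::'a::real_vector)"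
  by (simp add: scaleR_left_distrib[symmetric])

lemma is_sup1_projection_half:
  assumes q: "projection q"
  shows "is_sup1 {q, scaleR (1/2) 1} (scaleR (1/2) 1 + scaleR (1/2) q)"
  unfolding is_sup1_def
proof (intro conjI ballI impI)
  let ?s = "scaleR (1/2) 1 + scaleR (1/2) q"
  have e: "1 - ?s = scaleR (1/2) 1 + scaleR (-1/2) q" "?s - q = scaleR (1/2) 1 + scaleR (-1/2) q"
    by (simp_all add: algebra_simps scaleR_half_add_half eq_diff_eq)
  have "positive ?s" using positive_projection_combination[OF q, of "1/2" "1/2"] by simp
  moreover have "positive (1 - ?s)" unfolding e by (rule positive_projection_combination[OF q]) simp_all
  ultimately show "?s \<in> unit_interval" by (simp add: unit_interval_iff)
  have "cle q ?s" unfolding cle_def e by (rule positive_projection_combination[OF q]) simp_all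
  moreover have "cle (scaleR (1/2) 1) ?s"
    using positive_projection_combination[OF q, of 0 "1/2"] by (simp add: cle_def)
  ultimately show "cle x ?s" if "x \<in> {q, scaleR (1/2) 1}" for x using that by auto
  fix y assume y: "y \<in> unit_interval" and ub: "\<forall>x\<in>{q, scaleR (1/2) 1}. cle x y"
  have "y * q = q" "q * y = q" using effect_above_projection[OF q y] ub by auto
  moreover have "q * q = q" using q by (simp add: projection_def)
  ultimately have "(1 - q) * (y - scaleR (1/2) 1) * (1 - q) = y - ?s"
    by (simp add: algebra_simps scaleR_diff_right scaleR_half_add_half)
  moreover have "positive ((1 - q) * (y - scaleR (1/2) 1) * (1 - q))"
    using ub positive_compress[OF _ projection_one_minus[OF q]] by (simp add: cle_def)
  ultimately show "cle ?s y" by (simp add: cle_def)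
qed

lemma is_inf1_projection_half:
  assumes p: "projection p"
  shows "is_inf1 {p, scaleR (1/2) 1} (scaleR (1/2) p)"
  unfolding is_inf1_def
proof (intro conjI ballI impI)
  have pp: "p * p = p" using p by (simp add: projection_def)
  show "scaleR (1/2) p \<in> unit_interval"
    using positive_projection_combination[OF p, of 0 "1/2"] positive_projection_combination[OF p, of 1 "-1/2"]
    by (simp add: unit_interval_iff)
  have "p - scaleR (1/2) p = scaleR 0 1 + scaleR (1/2) p"
    by (simp add: algebra_simps scaleR_half_add_half eq_diff_eq)
  hence "cle (scaleR (1/2) p) p" using positive_projection_combination[OF p, of 0 "1/2"] by (simp add: cle_def)
  moreover have "cle (scaleR (1/2) p) (scaleR (1/2) 1)"
    using positive_projection_combination[OF p, of "1/2" "-1/2"] by (simp add: cle_def)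
  ultimately show "cle (scaleR (1/2) p) x" if "x \<in> {p, scaleR (1/2) 1}" for x using that by auto
  fix y assume y: "y \<in> unit_interval" and lb: "\<forall>x\<in>{p, scaleR (1/2) 1}. cle y x"
  have "y * p = y" "p * y = y" using effect_below_projection[OF p y] lb by auto
  hence "p * (scaleR (1/2) 1 - y) * p = scaleR (1/2) p - y" by (simp add: algebra_simps pp)
  moreover have "positive (p * (scaleR (1/2) 1 - y) * p)"
    using lb positive_compress[OF _ p] by (simp add: cle_def)
  ultimately show "cle y (scaleR (1/2) p)" by (simp add: cle_def)
qed

lemma is_inf1_orthogonal_projection_sup:
  assumes p: "projection p" and q: "projection q" and pq: "p * q = 0"
  shows "is_inf1 {p, scaleR (1/2) 1 + scaleR (1/2) q} (scaleR (1/2) p)"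
  unfolding is_inf1_def
proof (intro conjI ballI impI)
  let ?s = "scaleR (1/2) 1 + scaleR (1/2) q"
  have pp: "p * p = p" using p by (simp add: projection_def)
  have M: "is_inf1 {p, scaleR (1/2) 1} (scaleR (1/2) p)" by (rule is_inf1_projection_half[OF p])
  show "scaleR (1/2) p \<in> unit_interval" using M by (simp add: is_inf1_def)
  have "?s - scaleR (1/2) p = (scaleR (1/2) 1 + scaleR (-1/2) p) + scaleR (1/2) q"
    by (simp add: algebra_simps)
  moreover have "positive (scaleR (1/2) 1 + scaleR (-1/2) p)"
    by (rule positive_projection_combination[OF p]) simp_all
  moreover have "positive (scaleR (1/2) q)" by (rule positive_scaleR[OF positive_projection[OF q]]) simp
  ultimately have "cle (scaleR (1/2) p) ?s" unfolding cle_def by (metis add_positive_positive)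
  moreover have "cle (scaleR (1/2) p) p" using M by (simp add: is_inf1_def)
  ultimately show "cle (scaleR (1/2) p) x" if "x \<in> {p, ?s}" for x using that by auto
  fix y assume y: "y \<in> unit_interval" and lb: "\<forall>x\<in>{p, ?s}. cle y x"
  have "y * p = y" "p * y = y" using effect_below_projection[OF p y] lb by auto
  moreover have "p * (q * x) = 0" for x by (simp add: mult.assoc[symmetric] pq)
  ultimately have "p * (?s - y) * p = scaleR (1/2) p - y" by (simp add: algebra_simps pp pq)
  moreover have "positive (p * (?s - y) * p)" using lb positive_compress[OF _ p] by (simp add: cle_def)
  ultimately show "cle y (scaleR (1/2) p)" by (simp add: cle_def)
qed

lemma positive_conj_projection:
  assumes X: "adj X = X" and q: "projection q"
  shows "positive (X * q * X)"
proof -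
  have qq: "q * q = q" and aq: "adj q = q" using q by (auto simp: projection_def)
  have "positive (q * (X * X) * q)" by (rule positive_compress[OF positive_square[OF X] q])
  moreover have "q * (X * X) * q = (q * X) * adj (q * X)" by (simp add: adj_mult X aq mult.assoc)
  ultimately have "positive (adj (q * X) * (q * X))" using positive_adj_mult_self_swap by metis
  moreover have "adj (q * X) * (q * X) = X * q * X"
    by (simp add: adj_mult X aq mult.assoc mult.assoc[symmetric, of q q] qq)
  ultimately show ?thesis by simp
qed

lemma effect_below_projection_and_sup:
  assumes p: "projection p" and q: "projection q"
  defines "y \<equiv> scaleR (1/2) p + scaleR (1/4) (p * q * p)"
  shows "y \<in> unit_interval" "cle y p" "cle y (scaleR (1/2) 1 + scaleR (1/2) q)"
proof -
  have pp: "p * p = p" and ap: "adj p = p" using p by (auto simp: projection_def)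
  have qq: "q * q = q" using q by (simp add: projection_def)
  have pp': "p * (p * x) = p * x" and qq': "q * (q * x) = q * x" for x
    by (simp_all add: mult.assoc[symmetric] pp qq)
  have pqp: "positive (p * q * p)" by (rule positive_compress[OF positive_projection[OF q] p])
  have "positive y" unfolding y_def
    by (intro add_positive_positive positive_scaleR positive_projection p pqp) simp_all
  moreover have "positive (scaleR (1/4) p + scaleR (1/4) (p * (1 - q) * p))"
    by (intro add_positive_positive positive_scaleR positive_projection p
        positive_compress[OF positive_one_minus_projection[OF q] p]) simp_all
  moreover have "p - y = scaleR (1/4) p + scaleR (1/4) (p * (1 - q) * p)"
    unfolding y_def by (simp add: algebra_simps pp pp' scaleR_left_distrib[symmetric])
  ultimately have y: "positive y" and py: "positive (p - y)" by simp_all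
  have "positive ((1 - p) + (p - y))" by (rule add_positive_positive[OF positive_one_minus_projection[OF p] py])
  thus "y \<in> unit_interval" using y by (simp add: unit_interval_iff)
  show "cle y p" using py by (simp add: cle_def)
  define X where "X = scaleR (1/2) p + (1 - p)"
  have "adj X = X" by (simp add: X_def adj_add adj_diff adj_scaleR ap)
  hence "positive (X * q * X)" by (rule positive_conj_projection[OF _ q])
  moreover have "positive (scaleR (1/2) ((1 - p) * (1 - q) * (1 - p)))"
    by (intro positive_scaleR positive_compress[OF positive_one_minus_projection[OF q] projection_one_minus[OF p]])
      simp
  moreover have "(scaleR (1/2) 1 + scaleR (1/2) q) - y = X * q * X + scaleR (1/2) ((1 - p) * (1 - q) * (1 - p))"
    unfolding y_def X_def by (simp add: algebra_simps pp pp' qq qq' scaleR_left_distrib[symmetric])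
  ultimately show "cle y (scaleR (1/2) 1 + scaleR (1/2) q)" by (simp add: cle_def add_positive_positive)
qed

lemma orthogonal_if_below_half:
  assumes p: "projection p" and q: "projection q"
    and below: "cle (scaleR (1/2) p + scaleR (1/4) (p * q * p)) (scaleR (1/2) p)"
  shows "p * q = 0"
proof -
  have qq: "q * q = q" and aq: "adj q = q" and ap: "adj p = p" using p q by (auto simp: projection_def)
  have "positive (- scaleR (1/4) (p * q * p))" using below by (simp add: cle_def)
  moreover have "positive (scaleR (1/4) (p * q * p))"
    by (intro positive_scaleR positive_compress[OF positive_projection[OF q] p]) simp
  ultimately have "p * q * p = 0" using positive_antisym by fastforce
  moreover have "p * q * p = adj (q * p) * (q * p)"
    by (simp add: adj_mult ap aq mult.assoc mult.assoc[symmetric, of q q] qq)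
  ultimately have "q * p = 0" using adj_mult_self_eq_zeroD by metis
  hence "adj (q * p) = 0" by simp
  thus "p * q = 0" by (simp add: adj_mult ap aq)
qed

theorem lemma4p2:
  fixes p q :: "'a::aw_star_algebra"
  assumes "projection p" and "projection q"
  shows "p * q = 0 \<longleftrightarrow>
    (\<exists>s m. is_sup1 {q, scaleR (1/2) 1} s \<and>
           is_inf1 {p, scaleR (1/2) 1} m \<and>
           is_inf1 {p, s} m)"
proof
  let ?s = "scaleR (1/2) 1 + scaleR (1/2) q :: 'a" and ?m = "scaleR (1/2) p :: 'a"
  note S = is_sup1_projection_half[OF assms(2)] and M = is_inf1_projection_half[OF assms(1)]
  show "p * q = 0 \<Longrightarrow> \<exists>s m. is_sup1 {q, scaleR (1/2) 1} s \<and> is_inf1 {p, scaleR (1/2) 1} m \<and> is_inf1 {p, s} m"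
    using S M is_inf1_orthogonal_projection_sup[OF assms] by blast
  assume "\<exists>s m. is_sup1 {q, scaleR (1/2) 1} s \<and> is_inf1 {p, scaleR (1/2) 1} m \<and> is_inf1 {p, s} m"
  then obtain s m where "is_sup1 {q, scaleR (1/2) 1} s" "is_inf1 {p, scaleR (1/2) 1} m" "is_inf1 {p, s} m"
    by blast
  hence I: "is_inf1 {p, ?s} ?m" using is_sup1_unique[OF S] is_inf1_unique[OF M] by metis
  note W = effect_below_projection_and_sup[OF assms]
  have "cle (scaleR (1/2) p + scaleR (1/4) (p * q * p)) ?m"
    using I W unfolding is_inf1_def by blast
  thus "p * q = 0" by (rule orthogonal_if_below_half[OF assms])
qed

end
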